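(* Let $\mathbb{X}$ be a two-dimensional real Banach space, let $x\in S_{\mathbb{X}}$ be a smooth point, and let $\epsilon\in[0,1)$. Then there exists a normal cone $K$ in $\mathbb{X}$ such that $G(x,\epsilon)=K\cup(-K)$.
   Context: $S_{\mathbb{X}}$ is the unit sphere. A point $x\in S_{\mathbb{X}}$ is smooth if there is a unique norm-one linear functional $f$ with $f(x)=1$. For $x,y\in\mathbb{X}$ and $\epsilon\in[0,1)$, $x\perp_B^{\epsilon} y$ means $\|x+\lambda y\|^2\geq\|x\|^2-2\epsilon\|x\|\,\|\lambda y\|$ for all $\lambda\in\mathbb{R}$; $G(x,\epsilon)=\{y\in\mathbb{X}: x\perp_B^{\epsilon}y\}$. A subset $K\subseteq\mathbb{X}$ is a normal cone if $K+K\subseteq K$, $\alpha K\subseteq K$ for all $\alpha\geq0$, and $K\cap(-K)=\{0\}$. *)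

theory Defs
  imports "HOL-Analysis.Analysis"
begin

definition smooth_point :: "'a::real_normed_vector \<Rightarrow> bool" where
  "smooth_point x \<longleftrightarrow> norm x = 1 \<and>
     (\<exists>!f :: 'a \<Rightarrow> real. bounded_linear f \<and> onorm f = 1 \<and> f x = 1)"

definition approx_bj_orth :: "real \<Rightarrow> 'a::real_normed_vector \<Rightarrow> 'a \<Rightarrow> bool" where
  "approx_bj_orth \<epsilon> x y \<longleftrightarrow>
     (\<forall>t::real. (norm (x + t *\<^sub>R y))\<^sup>2 \<ge> (norm x)\<^sup>2 - 2 * \<epsilon> * norm x * norm (t *\<^sub>R y))"

definition G_set :: "'a::real_normed_vector \<Rightarrow> real \<Rightarrow> 'a set" where
  "G_set x \<epsilon> = {y. approx_bj_orth \<epsilon> x y}"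

definition normal_cone :: "'a::real_vector set \<Rightarrow> bool" where
  "normal_cone K \<longleftrightarrow> (\<forall>a\<in>K. \<forall>b\<in>K. a + b \<in> K) \<and>
     (\<forall>\<alpha>::real. \<alpha> \<ge> 0 \<longrightarrow> (\<forall>a\<in>K. \<alpha> *\<^sub>R a \<in> K)) \<and>
     K \<inter> uminus ` K = {0}"

end

theory Submission
  imports Defs
begin

text \<open>Let \<open>f\<close> be the unique norm-one functional with \<open>f x = 1\<close>; in dimension two every vector
  decomposes as \<open>v = f v x + c v w\<close> with \<open>f w = 0\<close> and \<open>c\<close> linear. Smoothness of \<open>x\<close> says that
  \<open>norm (\<alpha> x + u) - \<alpha>\<close> tends to \<open>0\<close> as \<open>\<alpha> \<rightarrow> \<infinity>\<close> for every \<open>u\<close> in the kernel of \<open>f\<close>: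
  otherwise a small multiple of the coordinate of \<open>u\<close> could be added to \<open>f\<close>, giving a second
  supporting functional. With this asymptote one shows that \<open>y\<close> is \<open>\<epsilon>\<close>-orthogonal to \<open>x\<close>
  exactly when \<open>\<bar>f y\<bar> \<le> \<epsilon> * norm y\<close> (one direction is just \<open>norm (x + t y) \<ge> f (x + t y)\<close>).
  This double cone is the union of \<open>K = {y. \<bar>f y\<bar> \<le> \<epsilon> * norm y \<and> 0 \<le> c y}\<close> and \<open>-K\<close>. Since
  \<open>\<epsilon> < 1\<close>, \<open>K\<close> meets the line through \<open>x\<close> only in \<open>0\<close>, and its slice \<open>c = 1\<close> is an interval;
  as the slope of a sum is the mediant of the slopes, \<open>K\<close> is closed under addition.\<close>

lemma independent_card_le_dim_UNIV:
  fixes B :: "'a::real_vector set"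
  assumes "dim (UNIV :: 'a set) \<noteq> 0" and "independent B"
  shows "card B \<le> dim (UNIV :: 'a set)"
proof -
  obtain S :: "'a set"
    where "S \<subseteq> UNIV" and S: "independent S" "UNIV \<subseteq> span S" "card S = dim (UNIV :: 'a set)"
    by (rule real_vector.basis_exists)
  then have "finite S"
    using assms(1) card.infinite by force
  with S assms(2) show ?thesis
    using real_vector.independent_span_bound[of S B] by auto
qed

lemma dim2_coordinates:
  fixes x :: "'a::real_vector" and f :: "'a \<Rightarrow> real"
  assumes dim: "dim (UNIV :: 'a set) = 2" and f: "linear f" "f x = 1"
  obtains w c where "linear c" "\<And>v. v = f v *\<^sub>R x + c v *\<^sub>R w"
proof -
  have x0: "x \<noteq> 0"
    using f linear_0 by fastforce
  have "\<not> UNIV \<subseteq> span {x}"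
    using dim_le_card[of UNIV "{x}"] dim by auto
  then obtain z where z: "z \<notin> span {x}"
    by blast
  define w where "w = z - f z *\<^sub>R x"
  have w: "w \<notin> span {x}"
    using z span_add[of w "{x}" "f z *\<^sub>R x"] by (auto simp: w_def span_base span_scale)
  then have "w \<noteq> x"
    by (auto simp: span_base)
  have ind: "independent {w, x}"
    using w x0 by (simp add: independent_insert)
  have spans: "UNIV \<subseteq> span {w, x}"
  proof
    fix v :: 'a
    show "v \<in> span {w, x}"
    proof (rule ccontr)
      assume v: "v \<notin> span {w, x}"
      then have "v \<noteq> w" "v \<noteq> x"
        by (auto simp: span_base)
      moreover have "card {v, w, x} \<le> 2"
        using independent_card_le_dim_UNIV[of "{v, w, x}"] independent_insertI[OF v ind] dim
        by simp
      ultimately show False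
        using \<open>w \<noteq> x\<close> by simp
    qed
  qed
  obtain c :: "'a \<Rightarrow> real" where c: "linear c" "c w = 1" "c x = 0"
    using real_vector.linear_independent_extend[OF ind, of "\<lambda>v. if v = w then 1 else 0"]
      \<open>w \<noteq> x\<close> by auto
  have "v - f v *\<^sub>R x - c v *\<^sub>R w = 0" for v
  proof (rule real_vector.linear_eq_0_on_span[where f = "\<lambda>v. v - f v *\<^sub>R x - c v *\<^sub>R w"])
    show "linear (\<lambda>v. v - f v *\<^sub>R x - c v *\<^sub>R w)"
      using f(1) c(1) by (simp add: linear_iff algebra_simps)
    show "u - f u *\<^sub>R x - c u *\<^sub>R w = 0" if "u \<in> {w, x}" for u
      using that c f w_def by (auto simp: linear_diff linear_scale)
    show "v \<in> span {w, x}"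
      using spans by blast
  qed
  then show thesis
    using that c(1) by (metis diff_diff_eq eq_iff_diff_eq_0)
qed

lemma norm_scaleR_add_diff:
  fixes x v :: "'a::real_normed_vector"
  assumes "norm x = 1"
  shows "norm (a *\<^sub>R x + v) \<le> norm (b *\<^sub>R x + v) + \<bar>a - b\<bar>"
proof -
  have "a *\<^sub>R x + v = (b *\<^sub>R x + v) + (a - b) *\<^sub>R x"
    by (simp add: algebra_simps)
  then show ?thesis
    using norm_triangle_ineq[of "b *\<^sub>R x + v" "(a - b) *\<^sub>R x"] assms by (simp only:) simp
qed

lemma smooth_point_asymptote:
  fixes x u :: "'a::real_normed_vector" and f h :: "'a \<Rightarrow> real"
  assumes smooth: "smooth_point x" and f: "bounded_linear f" "onorm f = 1" "f x = 1"
    and h: "linear h" "h u = 1" and decomp: "\<And>v. v = f v *\<^sub>R x + h v *\<^sub>R u"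
    and "\<delta> > 0"
  shows "\<exists>\<alpha>. norm (\<alpha> *\<^sub>R x + u) \<le> \<alpha> + \<delta>"
proof (rule ccontr)
  assume "\<not> ?thesis"
  then have far: "\<alpha> + \<delta> < norm (\<alpha> *\<^sub>R x + u)" for \<alpha>
    by (meson not_le)
  have "h x *\<^sub>R u = 0"
    using decomp[of x] f(3) by simp
  then have hx: "h x = 0"
    using h linear_0 by fastforce
  \<comment> \<open>Otherwise the functional \<open>f + \<delta> h\<close> would also be a norm-one support functional at \<open>x\<close>.\<close>
  define g where "g v = f v + \<delta> * h v" for v
  have g_le: "g v \<le> norm v" for v
  proof (cases "h v > 0")
    case True
    have "v = h v *\<^sub>R ((f v / h v) *\<^sub>R x + u)"
      using decomp[of v] True by (simp add: algebra_simps)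
    then have "norm v = h v * norm ((f v / h v) *\<^sub>R x + u)"
      using True by (metis abs_of_pos norm_scaleR)
    also have "\<dots> > h v * (f v / h v + \<delta>)"
      using far True by simp
    also have "h v * (f v / h v + \<delta>) = g v"
      using True by (simp add: g_def field_simps)
    finally show ?thesis
      by simp
  next
    case False
    then have "\<delta> * h v \<le> 0"
      using \<open>\<delta> > 0\<close> by (simp add: mult_nonneg_nonpos)
    then show ?thesis
      using onorm[OF f(1), of v] f(2) by (simp add: g_def)
  qed
  have g_abs: "norm (g v) \<le> norm v * 1" for v
    using g_le[of v] g_le[of "-v"] f(1) h(1)
    by (simp add: g_def linear_neg bounded_linear.linear)
  have g: "bounded_linear g"
  proof (rule bounded_linear_intro[OF _ _ g_abs])
    show "g (v + v') = g v + g v'" "g (r *\<^sub>R v) = r *\<^sub>R g v" for v v' r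
      using f(1) h(1) by (simp_all add: g_def linear_add linear_scale bounded_linear.linear algebra_simps)
  qed
  have "g x = 1"
    by (simp add: g_def f(3) hx)
  moreover have "onorm g = 1"
    using onorm_bound[of 1 g] g_abs onorm[OF g, of x] \<open>g x = 1\<close> smooth
    by (simp add: smooth_point_def)
  ultimately have "g = f"
    using smooth f g unfolding smooth_point_def by metis
  then have "f u + \<delta> * h u = f u"
    by (metis g_def)
  then show False
    using \<open>\<delta> > 0\<close> h(2) by simp
qed

lemma smooth_point_kernel_asymptote:
  fixes x w u :: "'a::real_normed_vector" and f c :: "'a \<Rightarrow> real"
  assumes smooth: "smooth_point x" and f: "bounded_linear f" "onorm f = 1" "f x = 1"
    and c: "linear c" and decomp: "\<And>v. v = f v *\<^sub>R x + c v *\<^sub>R w"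
    and "f u = 0" and "\<delta> > 0"
  shows "\<exists>\<alpha>. norm (\<alpha> *\<^sub>R x + u) \<le> \<alpha> + \<delta>"
proof -
  have u: "u = c u *\<^sub>R w"
    using decomp[of u] \<open>f u = 0\<close> by (metis add_0 scaleR_zero_left)
  show ?thesis
  proof (cases "c u = 0")
    case True
    then show ?thesis
      using u \<open>\<delta> > 0\<close> by (intro exI[of _ 0]) simp
  next
    case False
    show ?thesis
    proof (rule smooth_point_asymptote[OF smooth f _ _ _ \<open>\<delta> > 0\<close>])
      show "linear (\<lambda>v. c v / c u)"
        using c by (simp add: linear_iff add_divide_distrib)
      show "c u / c u = 1"
        using False by simp
      show "v = f v *\<^sub>R x + (c v / c u) *\<^sub>R u" for v
      proof -
        have "(c v / c u) *\<^sub>R u = c v *\<^sub>R w"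
          using False by (subst u) simp
        then show ?thesis
          by (simp only:) (rule decomp)
      qed
    qed
  qed
qed

lemma approx_bj_orth_if_abs_le:
  fixes x y :: "'a::real_normed_vector"
  assumes nx: "norm x = 1" and f: "linear f" "f x = 1" "\<And>v. f v \<le> norm v"
    and "0 \<le> \<epsilon>" and y: "\<bar>f y\<bar> \<le> \<epsilon> * norm y"
  shows "approx_bj_orth \<epsilon> x y"
  unfolding approx_bj_orth_def
proof
  fix t :: real
  define q where "q = \<epsilon> * norm (t *\<^sub>R y)"
  have "\<bar>t * f y\<bar> \<le> q"
    using mult_left_mono[OF y, of "\<bar>t\<bar>"] by (simp add: q_def abs_mult mult.left_commute)
  moreover have "f (x + t *\<^sub>R y) = 1 + t * f y"
    using f by (simp add: linear_add linear_scale)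
  ultimately have "1 - q \<le> norm (x + t *\<^sub>R y)"
    using f(3)[of "x + t *\<^sub>R y"] by linarith
  moreover have "0 \<le> q"
    using \<open>0 \<le> \<epsilon>\<close> by (simp add: q_def)
  ultimately have "1 - 2 * q \<le> (norm (x + t *\<^sub>R y))\<^sup>2"
  proof (cases "q \<le> 1")
    case True
    then have "(1 - q)\<^sup>2 \<le> (norm (x + t *\<^sub>R y))\<^sup>2"
      using \<open>1 - q \<le> norm (x + t *\<^sub>R y)\<close> by (simp add: power_mono)
    moreover have "1 - 2 * q \<le> (1 - q)\<^sup>2"
      by (simp add: power2_eq_square algebra_simps)
    ultimately show ?thesis
      by linarith
  next
    case False
    then have "1 - 2 * q < 0"
      by simp
    then show ?thesis
      using zero_le_power2[of "norm (x + t *\<^sub>R y)"] by linarith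
  qed
  then show "(norm x)\<^sup>2 - 2 * \<epsilon> * norm x * norm (t *\<^sub>R y) \<le> (norm (x + t *\<^sub>R y))\<^sup>2"
    using nx by (simp add: q_def)
qed

lemma approx_bj_orth_uminus:
  "approx_bj_orth \<epsilon> x y \<Longrightarrow> approx_bj_orth \<epsilon> x (- y)"
  unfolding approx_bj_orth_def
proof (intro allI)
  fix t :: real
  assume "\<forall>t. (norm x)\<^sup>2 - 2 * \<epsilon> * norm x * norm (t *\<^sub>R y) \<le> (norm (x + t *\<^sub>R y))\<^sup>2"
  then have "(norm x)\<^sup>2 - 2 * \<epsilon> * norm x * norm ((- t) *\<^sub>R y) \<le> (norm (x + (- t) *\<^sub>R y))\<^sup>2"
    by blast
  then show "(norm x)\<^sup>2 - 2 * \<epsilon> * norm x * norm (t *\<^sub>R - y) \<le> (norm (x + t *\<^sub>R - y))\<^sup>2"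
    by simp
qed

lemma le_if_approx_bj_orth:
  fixes x v :: "'a::real_normed_vector"
  assumes nx: "norm x = 1" and "0 \<le> \<epsilon>"
    and asymptote: "\<And>\<delta>. \<delta> > 0 \<Longrightarrow> \<exists>\<alpha>. norm (\<alpha> *\<^sub>R x + v) \<le> \<alpha> + \<delta>"
    and orth: "approx_bj_orth \<epsilon> x (s *\<^sub>R x - v)"
  shows "s \<le> \<epsilon> * norm (s *\<^sub>R x - v)"
proof (rule ccontr)
  define N where "N = norm (s *\<^sub>R x - v)"
  define e where "e = s - \<epsilon> * N"
  define \<delta> where "\<delta> = e / 2"
  assume "\<not> ?thesis"
  then have e: "e > 0"
    by (simp add: e_def N_def)
  moreover have "0 \<le> \<epsilon> * N"
    using \<open>0 \<le> \<epsilon>\<close> by (simp add: N_def)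
  ultimately have s: "s > 0"
    by (simp add: e_def)
  obtain \<alpha>0 where \<alpha>0: "norm (\<alpha>0 *\<^sub>R x + v) \<le> \<alpha>0 + \<delta>"
    using asymptote[of \<delta>] e by (auto simp: \<delta>_def)
  \<comment> \<open>For large \<open>\<alpha>\<close> the step \<open>t = -1 / (\<alpha> + s)\<close> moves \<open>x\<close> to a multiple of \<open>\<alpha> x + v\<close>, which is too short.\<close>
  define \<alpha> where "\<alpha> = max \<alpha>0 ((s - \<delta>)\<^sup>2 / e)"
  define \<mu> where "\<mu> = 1 / (\<alpha> + s)"
  have "(s - \<delta>)\<^sup>2 / e \<le> \<alpha>"
    by (simp add: \<alpha>_def)
  then have "(s - \<delta>)\<^sup>2 \<le> e * \<alpha>"
    using e by (simp add: pos_divide_le_eq mult.commute)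
  then have "(s - \<delta>)\<^sup>2 < e * (\<alpha> + s)"
    using mult_pos_pos[OF e s] by (simp add: algebra_simps)
  moreover have "0 \<le> (s - \<delta>)\<^sup>2"
    by simp
  ultimately have "\<alpha> + s > 0"
    using e by (meson le_less_trans zero_less_mult_pos)
  with \<open>(s - \<delta>)\<^sup>2 < e * (\<alpha> + s)\<close>
  have \<mu>: "\<mu> > 0" "\<mu> * (\<alpha> + s) = 1" and small: "\<mu> * (s - \<delta>)\<^sup>2 < e"
    by (simp_all add: \<mu>_def field_simps)
  have "x + (- \<mu>) *\<^sub>R (s *\<^sub>R x - v) = \<mu> *\<^sub>R (\<alpha> *\<^sub>R x + v)"
    using \<mu>(2) by (simp add: algebra_simps scaleR_add_left[symmetric])
  then have "norm (x + (- \<mu>) *\<^sub>R (s *\<^sub>R x - v)) = \<mu> * norm (\<alpha> *\<^sub>R x + v)"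
    using \<mu>(1) by simp
  also have "\<dots> \<le> \<mu> * (\<alpha> + \<delta>)"
    using norm_scaleR_add_diff[OF nx, of \<alpha> v \<alpha>0] \<alpha>0 \<mu>(1) by (simp add: \<alpha>_def)
  also have "\<dots> = 1 - \<mu> * (s - \<delta>)"
    using \<mu>(2) by (simp add: algebra_simps)
  finally have "norm (x + (- \<mu>) *\<^sub>R (s *\<^sub>R x - v)) \<le> 1 - \<mu> * (s - \<delta>)" .
  then have "(norm (x + (- \<mu>) *\<^sub>R (s *\<^sub>R x - v)))\<^sup>2 \<le> (1 - \<mu> * (s - \<delta>))\<^sup>2"
    by (simp add: power_mono)
  also have "\<dots> = 1 - 2 * \<mu> * (s - \<delta>) + \<mu> * (\<mu> * (s - \<delta>)\<^sup>2)"
    by (simp add: power2_eq_square algebra_simps)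
  also have "\<dots> < 1 - 2 * \<mu> * (s - \<delta>) + \<mu> * e"
    using small \<mu>(1) by simp
  also have "\<dots> = 1 - 2 * \<epsilon> * (\<mu> * N)"
    by (simp add: \<delta>_def e_def field_simps)
  finally show False
    using orth \<mu>(1) nx unfolding approx_bj_orth_def
    by (auto simp: N_def dest: spec[of _ "- \<mu>"])
qed

lemma G_set_smooth_point:
  fixes x w :: "'a::real_normed_vector" and f c :: "'a \<Rightarrow> real"
  assumes smooth: "smooth_point x" and f: "bounded_linear f" "onorm f = 1" "f x = 1"
    and c: "linear c" and decomp: "\<And>v. v = f v *\<^sub>R x + c v *\<^sub>R w" and "0 \<le> \<epsilon>"
  shows "G_set x \<epsilon> = {y. \<bar>f y\<bar> \<le> \<epsilon> * norm y}"
proof -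
  have nx: "norm x = 1"
    using smooth by (simp add: smooth_point_def)
  have lf: "linear f"
    using f(1) by (rule bounded_linear.linear)
  have le: "f y \<le> \<epsilon> * norm y" if "approx_bj_orth \<epsilon> x y" for y
  proof -
    have "f (f y *\<^sub>R x - y) = 0"
      using lf f(3) by (simp add: linear_diff linear_scale)
    then have "\<exists>\<alpha>. norm (\<alpha> *\<^sub>R x + (f y *\<^sub>R x - y)) \<le> \<alpha> + \<delta>" if "\<delta> > 0" for \<delta>
      using smooth_point_kernel_asymptote[OF smooth f c decomp _ that] by blast
    from le_if_approx_bj_orth[OF nx \<open>0 \<le> \<epsilon>\<close> this, of "f y"] that show ?thesis
      by simp
  qed
  show ?thesis
  proof (intro set_eqI iffI)
    fix y
    assume "y \<in> G_set x \<epsilon>"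
    then show "y \<in> {y. \<bar>f y\<bar> \<le> \<epsilon> * norm y}"
      using le[of y] le[of "- y"] approx_bj_orth_uminus[of \<epsilon> x y] lf by (simp add: G_set_def linear_neg)
  next
    fix y
    assume "y \<in> {y. \<bar>f y\<bar> \<le> \<epsilon> * norm y}"
    then show "y \<in> G_set x \<epsilon>"
      using approx_bj_orth_if_abs_le[OF nx lf f(3) _ \<open>0 \<le> \<epsilon>\<close>] onorm[OF f(1)] f(2)
      by (simp add: G_set_def abs_le_iff)
  qed
qed

lemma mediant_between:
  fixes a1 a2 b1 b2 :: real
  assumes "0 < b1" "0 < b2"
  shows "min (a1 / b1) (a2 / b2) \<le> (a1 + a2) / (b1 + b2)"
    and "(a1 + a2) / (b1 + b2) \<le> max (a1 / b1) (a2 / b2)"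
  using assms by (auto simp: min_def max_def field_simps)

lemma abs_le_norm_scaleR_add_between:
  fixes x w :: "'a::real_normed_vector"
  assumes nx: "norm x = 1" and "0 \<le> \<epsilon>" "\<epsilon> < 1"
    and t1: "\<bar>t1\<bar> \<le> \<epsilon> * norm (t1 *\<^sub>R x + w)" and t2: "\<bar>t2\<bar> \<le> \<epsilon> * norm (t2 *\<^sub>R x + w)"
    and "t1 \<le> t" "t \<le> t2"
  shows "\<bar>t\<bar> \<le> \<epsilon> * norm (t *\<^sub>R x + w)"
proof -
  \<comment> \<open>Moving \<open>t\<close> away from \<open>0\<close> by \<open>d\<close> raises the norm by at most \<open>d\<close>, hence \<open>\<epsilon> * norm\<close> by less than \<open>d\<close>.\<close>
  have away: "\<bar>t\<bar> \<le> \<epsilon> * norm (t *\<^sub>R z + w)"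
    if "norm z = 1" "0 \<le> t" "t \<le> t'" "\<bar>t'\<bar> \<le> \<epsilon> * norm (t' *\<^sub>R z + w)" for z t t'
  proof -
    have "t' \<le> \<epsilon> * (norm (t *\<^sub>R z + w) + (t' - t))"
      using that norm_scaleR_add_diff[of z t' w t] mult_left_mono[OF _ \<open>0 \<le> \<epsilon>\<close>] by fastforce
    moreover have "\<epsilon> * (t' - t) \<le> t' - t"
      using mult_right_mono[of \<epsilon> 1 "t' - t"] that \<open>\<epsilon> < 1\<close> by simp
    ultimately show ?thesis
      using that by (simp add: algebra_simps)
  qed
  show ?thesis
  proof (cases "0 \<le> t")
    case True
    then show ?thesis
      using away[OF nx True \<open>t \<le> t2\<close> t2] by simp
  next
    case False
    have "\<bar>- t1\<bar> \<le> \<epsilon> * norm ((- t1) *\<^sub>R (- x) + w)"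
      using t1 by simp
    then show ?thesis
      using away[of "- x" "- t" "- t1"] nx False \<open>t1 \<le> t\<close> by simp
  qed
qed

lemma normal_cone_abs_le_coordinate_nonneg:
  fixes x w :: "'a::real_normed_vector" and f c :: "'a \<Rightarrow> real"
  assumes nx: "norm x = 1" and \<epsilon>: "0 \<le> \<epsilon>" "\<epsilon> < 1"
    and f: "linear f" and c: "linear c" and decomp: "\<And>v. v = f v *\<^sub>R x + c v *\<^sub>R w"
  shows "normal_cone {y. \<bar>f y\<bar> \<le> \<epsilon> * norm y \<and> 0 \<le> c y}" (is "normal_cone ?K")
proof -
  have zero: "y = 0" if "\<bar>f y\<bar> \<le> \<epsilon> * norm y" "c y = 0" for y
  proof -
    have y: "y = f y *\<^sub>R x"
      using decomp[of y] that(2) by simp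
    then have "\<bar>f y\<bar> \<le> \<epsilon> * \<bar>f y\<bar>"
      using that(1) nx by (metis mult.right_neutral norm_scaleR)
    then have "f y = 0"
      using \<epsilon> by (metis abs_ge_zero abs_le_zero_iff mult_le_cancel_right1 not_le)
    then show ?thesis
      using y by simp
  qed
  have slice: "\<bar>f y\<bar> \<le> \<epsilon> * norm y \<longleftrightarrow> \<bar>f y / c y\<bar> \<le> \<epsilon> * norm ((f y / c y) *\<^sub>R x + w)"
    if "0 < c y" for y
  proof -
    have "y = c y *\<^sub>R ((f y / c y) *\<^sub>R x + w)"
      using decomp[of y] that by (simp add: algebra_simps)
    then have "norm y = c y * norm ((f y / c y) *\<^sub>R x + w)"
      using that by (metis abs_of_pos norm_scaleR)
    then show ?thesis
      using that by (simp add: abs_div divide_le_eq mult.commute mult.left_commute)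
  qed
  have add: "y1 + y2 \<in> ?K" if y1: "y1 \<in> ?K" and y2: "y2 \<in> ?K" for y1 y2
  proof (cases "c y1 = 0 \<or> c y2 = 0")
    case True
    then have "y1 = 0 \<or> y2 = 0"
      using y1 y2 zero by blast
    then show ?thesis
      using y1 y2 by auto
  next
    case False
    then have pos: "0 < c y1" "0 < c y2"
      using that by auto
    define t where "t y = f y / c y" for y
    have sum: "t (y1 + y2) = (f y1 + f y2) / (c y1 + c y2)" "0 < c (y1 + y2)"
      using f c pos by (simp_all add: t_def linear_add)
    have t: "\<bar>t y\<bar> \<le> \<epsilon> * norm (t y *\<^sub>R x + w)" if "y \<in> {y1, y2}" for y
      using that y1 y2 slice pos by (auto simp: t_def)
    have "\<bar>t (y1 + y2)\<bar> \<le> \<epsilon> * norm (t (y1 + y2) *\<^sub>R x + w)"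
    proof (rule abs_le_norm_scaleR_add_between[OF nx \<epsilon>])
      show "\<bar>min (t y1) (t y2)\<bar> \<le> \<epsilon> * norm (min (t y1) (t y2) *\<^sub>R x + w)"
        using t by (simp add: min_def)
      show "\<bar>max (t y1) (t y2)\<bar> \<le> \<epsilon> * norm (max (t y1) (t y2) *\<^sub>R x + w)"
        using t by (simp add: max_def)
      show "min (t y1) (t y2) \<le> t (y1 + y2)" "t (y1 + y2) \<le> max (t y1) (t y2)"
        using mediant_between[OF pos] unfolding sum(1) by (simp_all add: t_def)
    qed
    then show ?thesis
      using slice[OF sum(2)] sum(2) by (simp add: t_def)
  qed
  have scale: "a *\<^sub>R y \<in> ?K" if "0 \<le> a" "y \<in> ?K" for a y
    using that mult_left_mono[of "\<bar>f y\<bar>" "\<epsilon> * norm y" a] f c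
    by (simp add: linear_scale abs_mult mult.left_commute)
  have "0 \<in> ?K"
    using f c by (simp add: linear_0)
  then have "0 \<in> ?K \<inter> uminus ` ?K"
    using image_eqI[of 0 uminus 0] by simp
  moreover have "?K \<inter> uminus ` ?K \<subseteq> {0}"
    using zero c by (force simp: linear_neg)
  ultimately have "?K \<inter> uminus ` ?K = {0}"
    by blast
  then show ?thesis
    unfolding normal_cone_def using add scale by simp
qed

theorem theorem2p7:
  fixes x :: "'a::banach" and \<epsilon> :: real
  assumes "dim (UNIV :: 'a set) = 2"
    and "smooth_point x"
    and "0 \<le> \<epsilon>" and "\<epsilon> < 1"
  shows "\<exists>K. normal_cone K \<and> G_set x \<epsilon> = K \<union> uminus ` K"
proof -
  obtain f :: "'a \<Rightarrow> real" where f: "bounded_linear f" "onorm f = 1" "f x = 1"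
    using assms(2) unfolding smooth_point_def by blast
  have lf: "linear f"
    using f(1) by (rule bounded_linear.linear)
  obtain w c where c: "linear c" and decomp: "\<And>v. v = f v *\<^sub>R x + c v *\<^sub>R w"
    using dim2_coordinates[OF assms(1) lf f(3)] by blast
  define K where "K = {y. \<bar>f y\<bar> \<le> \<epsilon> * norm y \<and> 0 \<le> c y}"
  have "normal_cone K"
    unfolding K_def using normal_cone_abs_le_coordinate_nonneg[OF _ assms(3,4) lf c decomp] assms(2)
    by (simp add: smooth_point_def)
  moreover have "{y. \<bar>f y\<bar> \<le> \<epsilon> * norm y} = K \<union> uminus ` K"
  proof (intro set_eqI iffI)
    fix y
    assume y: "y \<in> {y. \<bar>f y\<bar> \<le> \<epsilon> * norm y}"
    show "y \<in> K \<union> uminus ` K"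
    proof (cases "0 \<le> c y")
      case False
      then have "- y \<in> K"
        using y lf c by (simp add: K_def linear_neg)
      then show ?thesis
        by (metis UnI2 image_eqI minus_minus)
    qed (use y in \<open>simp add: K_def\<close>)
  qed (use lf in \<open>auto simp: K_def linear_neg\<close>)
  ultimately show ?thesis
    using G_set_smooth_point[OF assms(2) f c decomp assms(3)] by auto
qed

end
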